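(* Let $H$, $L$ be as in the context with $L\mid Z$, let $k$ be an integer with $1\le k\le L-1$, and let $\mathcal T_0=\{x\in[MZ): x\equiv 0\pmod L\}$. Then $(1,\mathcal T_0)$ is a feasible solution with layer distance $d(1,\mathcal T_0)\ge k$ if and only if for every $j\in[NZ)$: (i) $\mathcal N(v_j)\cap\mathcal N(v_{\pi^t(j)})=\emptyset$ for all $t\in[1,k)$, and (ii) $\big|\{x\in\bigcup_{t\in[k)}\mathcal N(v_{\pi^t(j)}): x\equiv 0\pmod L\}\big|\le 1$.
   Context: Notation: $[a,b)=\{a,\dots,b-1\}$, $[n)=[0,n)$. Let $M,N,Z$ be positive integers and let $H$ be a binary $MZ\times NZ$ matrix made of $M\times N$ blocks, each a $Z\times Z$ circulant; assume $H$ has no zero row and no two identical rows. For $j\in[NZ)$, $\mathcal N(v_j)=\{i\in[MZ):H[i][j]=1\}$. For an index $i$ (a row index in $[MZ)$ or a column index in $[NZ)$) and an integer $s$, $\pi^s(i)=Z\lfloor i/Z\rfloor+((i+s)\bmod Z)$; for a set $\mathcal T$ of row indices, $\pi^s(\mathcal T)=\{\pi^s(x):x\in\mathcal T\}$. For $\mathcal A\subseteq[MZ)$, $H_{\mathcal A}$ is the submatrix of rows indexed by $\mathcal A$; $\omega(A)$ is the maximum Hamming weight of a column of $A$ ($\omega$ of the empty matrix is $0$). Fix an integer $L>1$. A pair $(S,\mathcal T_0)$ ($S$ a positive integer, $\mathcal T_0\subseteq[MZ)$) is a feasible solution if, with $\mathcal T_l=\pi^{lS}(\mathcal T_0)$ for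 $l\in[L)$, the sets $\mathcal T_0,\dots,\mathcal T_{L-1}$ are pairwise disjoint with union $[MZ)$. The layer distance $d(S,\mathcal T_0)$ is the largest $l\in[L)$ such that the vertical stack of $H_{\mathcal T_0},\dots,H_{\mathcal T_{l-1}}$ has maximum column weight at most $1$. *)

theory Defs
  imports Main
begin

definition pi_shift :: "nat \<Rightarrow> nat \<Rightarrow> nat \<Rightarrow> nat" where
  "pi_shift Z s i = Z * (i div Z) + (i + s) mod Z"

text \<open>H (an MZ x NZ binary matrix, as a boolean function on indices) consists of
  Z x Z circulant blocks: shifting row and column by one inside their blocks preserves entries.\<close>
definition circulant_blocks :: "nat \<Rightarrow> nat \<Rightarrow> nat \<Rightarrow> (nat \<Rightarrow> nat \<Rightarrow> bool) \<Rightarrow> bool" where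
  "circulant_blocks M N Z H \<longleftrightarrow>
     (\<forall>i<M*Z. \<forall>j<N*Z. H (pi_shift Z 1 i) (pi_shift Z 1 j) = H i j)"

definition no_zero_row :: "nat \<Rightarrow> nat \<Rightarrow> nat \<Rightarrow> (nat \<Rightarrow> nat \<Rightarrow> bool) \<Rightarrow> bool" where
  "no_zero_row M N Z H \<longleftrightarrow> (\<forall>i<M*Z. \<exists>j<N*Z. H i j)"

definition no_identical_rows :: "nat \<Rightarrow> nat \<Rightarrow> nat \<Rightarrow> (nat \<Rightarrow> nat \<Rightarrow> bool) \<Rightarrow> bool" where
  "no_identical_rows M N Z H \<longleftrightarrow>
     (\<forall>i<M*Z. \<forall>i'<M*Z. i \<noteq> i' \<longrightarrow> (\<exists>j<N*Z. H i j \<noteq> H i' j))"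

definition nbr :: "nat \<Rightarrow> nat \<Rightarrow> (nat \<Rightarrow> nat \<Rightarrow> bool) \<Rightarrow> nat \<Rightarrow> nat set" where
  "nbr M Z H j = {i. i < M*Z \<and> H i j}"

definition layer :: "nat \<Rightarrow> nat \<Rightarrow> nat set \<Rightarrow> nat \<Rightarrow> nat set" where
  "layer Z S T0 l = pi_shift Z (l*S) ` T0"

definition feasible :: "nat \<Rightarrow> nat \<Rightarrow> nat \<Rightarrow> nat \<Rightarrow> nat set \<Rightarrow> bool" where
  "feasible M Z L S T0 \<longleftrightarrow>
     0 < S \<and> T0 \<subseteq> {..<M*Z} \<and>
     (\<forall>l1<L. \<forall>l2<L. l1 \<noteq> l2 \<longrightarrow> layer Z S T0 l1 \<inter> layer Z S T0 l2 = {}) \<and>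
     (\<Union>l<L. layer Z S T0 l) = {..<M*Z}"

text \<open>Weight of column j of the vertical stack of H_{T_0}, ..., H_{T_{l-1}}
  (rows of each H_{T_t} counted separately).\<close>
definition stack_col_weight ::
  "nat \<Rightarrow> (nat \<Rightarrow> nat \<Rightarrow> bool) \<Rightarrow> nat \<Rightarrow> nat set \<Rightarrow> nat \<Rightarrow> nat \<Rightarrow> nat" where
  "stack_col_weight Z H S T0 l j = (\<Sum>t<l. card {i \<in> layer Z S T0 t. H i j})"

definition stack_omega ::
  "nat \<Rightarrow> nat \<Rightarrow> (nat \<Rightarrow> nat \<Rightarrow> bool) \<Rightarrow> nat \<Rightarrow> nat set \<Rightarrow> nat \<Rightarrow> nat" where
  "stack_omega N Z H S T0 l =
     (if l = 0 then 0 else Max ((\<lambda>j. stack_col_weight Z H S T0 l j) ` {..<N*Z}))"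

definition layer_distance ::
  "nat \<Rightarrow> nat \<Rightarrow> nat \<Rightarrow> (nat \<Rightarrow> nat \<Rightarrow> bool) \<Rightarrow> nat \<Rightarrow> nat set \<Rightarrow> nat" where
  "layer_distance N Z L H S T0 = (GREATEST l. l < L \<and> stack_omega N Z H S T0 l \<le> 1)"

end

theory Submission
  imports Defs
begin

(* Since L divides Z, the shift pi^s moves every row index by s modulo L, so the layers
   pi^l(T_0) are exactly the residue classes mod L: (1, T_0) is always feasible, and column j
   of the stack of the first k layers has weight |{i in N(v_j). i mod L < k}|.
   By circulance, pi^(k-1-t) maps the rows of N(v_(pi^t j)) that are 0 mod L bijectively onto
   the rows of N(v_(pi^(k-1) j)) of residue k-1-t, so that weight at pi^(k-1) j is the sum over
   t < k of |{x in N(v_(pi^t j)). x mod L = 0}|.  Condition (i) says exactly that these k sets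
   are pairwise disjoint, which turns the sum into the cardinality in (ii); conversely, a row
   shared by N(v_j) and N(v_(pi^t j)), shifted to residue 0, is counted twice in the sum. *)

lemma pi_shift_add: "pi_shift Z a (pi_shift Z b x) = pi_shift Z (a + b) x"
  unfolding pi_shift_def by (cases "Z = 0") (simp_all add: mod_add_left_eq add.commute[of a b] add.assoc)

lemma pi_shift_dvd: "Z dvd n \<Longrightarrow> pi_shift Z n x = x"
  unfolding pi_shift_def by (auto simp: mod_add_right_eq[symmetric])

lemma pi_shift_0 [simp]: "pi_shift Z 0 x = x"
  by (simp add: pi_shift_dvd)

lemma pi_shift_less:
  assumes x: "x < n * Z"
  shows "pi_shift Z s x < n * Z"
proof -
  from x have "0 < Z"
    by (cases "Z = 0") simp_all
  with x have "Suc (x div Z) \<le> n"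
    by (simp add: Suc_le_eq div_less_iff_less_mult)
  then have "Suc (x div Z) * Z \<le> n * Z"
    by (rule mult_le_mono1)
  then have "Z * (x div Z) + Z \<le> n * Z"
    by (simp add: algebra_simps)
  moreover have "(x + s) mod Z < Z"
    using \<open>0 < Z\<close> by simp
  ultimately show ?thesis
    unfolding pi_shift_def by linarith
qed

lemma pi_shift_mod_dvd:
  assumes "L dvd Z"
  shows "pi_shift Z s x mod L = (x + s) mod L"
proof -
  obtain c where "Z = L * c"
    using assms by blast
  then have "pi_shift Z s x mod L = (x + s) mod Z mod L"
    unfolding pi_shift_def by (simp add: mult.assoc)
  also have "\<dots> = (x + s) mod L"
    using assms by (rule mod_mod_cancel)
  finally show ?thesis .
qed

lemma pi_shift_residue: "L dvd Z \<Longrightarrow> x mod L = 0 \<Longrightarrow> s < L \<Longrightarrow> pi_shift Z s x mod L = s"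
  by (simp add: pi_shift_mod_dvd mod_add_left_eq[symmetric])

lemma pi_shift_to_residue_0:
  assumes "L dvd Z" "0 < Z"
  shows "pi_shift Z (Z - y mod L) y mod L = 0"
proof -
  have "L \<le> Z" "0 < L"
    using assms by (simp_all add: dvd_imp_le dvd_pos_nat)
  then have "y mod L \<le> Z"
    using mod_less_divisor[of L y] by linarith
  moreover have "y = L * (y div L) + y mod L"
    by (rule mult_div_mod_eq[symmetric])
  ultimately have "y + (Z - y mod L) = L * (y div L) + Z"
    by linarith
  then show ?thesis
    using assms(1) by (simp add: pi_shift_mod_dvd)
qed

lemma inj_pi_shift: "s \<le> Z \<Longrightarrow> inj (pi_shift Z s)"
  by (rule inj_on_inverseI[where g = "pi_shift Z (Z - s)"]) (simp add: pi_shift_add pi_shift_dvd)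

lemma finite_nbr: "finite (nbr M Z H j)"
  unfolding nbr_def by simp

lemma layer_residue_class:
  assumes "L dvd Z" "0 < Z" "l < L"
  shows "layer Z 1 {x. x < M * Z \<and> x mod L = 0} l = {y. y < M * Z \<and> y mod L = l}"
proof (intro equalityI subsetI)
  fix y assume "y \<in> layer Z 1 {x. x < M * Z \<and> x mod L = 0} l"
  then obtain x where "x < M * Z" "x mod L = 0" "y = pi_shift Z l x"
    unfolding layer_def by auto
  then show "y \<in> {y. y < M * Z \<and> y mod L = l}"
    using assms by (simp add: pi_shift_less pi_shift_residue)
next
  fix y assume y: "y \<in> {y. y < M * Z \<and> y mod L = l}"
  have "l \<le> Z"
    using dvd_imp_le[OF assms(1,2)] assms(3) by linarith
  define x where "x = pi_shift Z (Z - l) y"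
  have "pi_shift Z l x = y"
    unfolding x_def using \<open>l \<le> Z\<close> by (simp add: pi_shift_add pi_shift_dvd)
  moreover have "x mod L = 0"
    unfolding x_def using y assms(1,2) pi_shift_to_residue_0 by auto
  moreover have "x < M * Z"
    unfolding x_def using y by (simp add: pi_shift_less)
  ultimately show "y \<in> layer Z 1 {x. x < M * Z \<and> x mod L = 0} l"
    unfolding layer_def by force
qed

lemma feasible_residue_class:
  assumes "L dvd Z" "0 < Z"
  shows "feasible M Z L 1 {x. x < M * Z \<and> x mod L = 0}"
proof -
  have "0 < L"
    using assms by (auto intro: dvd_pos_nat)
  then show ?thesis
    unfolding feasible_def using layer_residue_class[OF assms] by auto
qed

lemma stack_col_weight_residue_class:
  assumes "L dvd Z" "0 < Z" "l \<le> L"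
  shows "stack_col_weight Z H 1 {x. x < M * Z \<and> x mod L = 0} l j
           = card {i \<in> nbr M Z H j. i mod L < l}"
proof -
  have "stack_col_weight Z H 1 {x. x < M * Z \<and> x mod L = 0} l j
          = (\<Sum>t<l. card {i \<in> nbr M Z H j. i mod L = t})"
    unfolding stack_col_weight_def nbr_def
    using assms layer_residue_class[OF assms(1,2)] by (intro sum.cong) (auto intro!: arg_cong[where f = card])
  also have "\<dots> = card (\<Union>t<l. {i \<in> nbr M Z H j. i mod L = t})"
    unfolding nbr_def by (rule card_UN_disjoint[symmetric]) auto
  also have "(\<Union>t<l. {i \<in> nbr M Z H j. i mod L = t}) = {i \<in> nbr M Z H j. i mod L < l}"
    by auto
  finally show ?thesis .
qed

lemma stack_omega_le_1_iff:
  assumes "L dvd Z" "0 < Z" "0 < N" "l \<le> L"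
  shows "stack_omega N Z H 1 {x. x < M * Z \<and> x mod L = 0} l \<le> 1
           \<longleftrightarrow> (\<forall>j<N * Z. card {i \<in> nbr M Z H j. i mod L < l} \<le> 1)"
proof -
  have "{..<N * Z} \<noteq> {}"
    using assms by (simp add: lessThan_empty_iff)
  then show ?thesis
    using stack_col_weight_residue_class[OF assms(1,2,4)]
    by (auto simp: stack_omega_def Max_le_iff)
qed

lemma le_Greatest_bounded_iff:
  fixes P :: "nat \<Rightarrow> bool"
  assumes downward_closed: "\<And>l g. g < b \<Longrightarrow> P g \<Longrightarrow> l \<le> g \<Longrightarrow> P l"
    and "P 0" "k < b"
  shows "k \<le> (GREATEST l. l < b \<and> P l) \<longleftrightarrow> P k"
proof
  assume "k \<le> (GREATEST l. l < b \<and> P l)"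
  moreover have "(GREATEST l. l < b \<and> P l) < b \<and> P (GREATEST l. l < b \<and> P l)"
    by (rule GreatestI_nat[where k = 0 and b = b]) (use \<open>P 0\<close> \<open>k < b\<close> in auto)
  ultimately show "P k"
    using downward_closed by blast
next
  assume "P k"
  show "k \<le> (GREATEST l. l < b \<and> P l)"
    by (rule Greatest_le_nat[where b = b]) (use \<open>P k\<close> \<open>k < b\<close> in auto)
qed

lemma layer_distance_ge_iff:
  assumes "L dvd Z" "0 < Z" "0 < N" "k < L"
  shows "k \<le> layer_distance N Z L H 1 {x. x < M * Z \<and> x mod L = 0}
           \<longleftrightarrow> (\<forall>j<N * Z. card {i \<in> nbr M Z H j. i mod L < k} \<le> 1)"
proof -
  let ?P = "\<lambda>l. stack_omega N Z H 1 {x. x < M * Z \<and> x mod L = 0} l \<le> 1"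
  note P_iff = stack_omega_le_1_iff[OF assms(1-3)]
  have mono: "card {i \<in> nbr M Z H j. i mod L < l} \<le> card {i \<in> nbr M Z H j. i mod L < g}"
    if "l \<le> g" for l g j
    using that finite_nbr by (intro card_mono) auto
  have "?P l" if "g < L" "?P g" "l \<le> g" for l g
  proof -
    have "\<forall>j<N * Z. card {i \<in> nbr M Z H j. i mod L < g} \<le> 1"
      using that P_iff by simp
    then have "\<forall>j<N * Z. card {i \<in> nbr M Z H j. i mod L < l} \<le> 1"
      using mono[OF \<open>l \<le> g\<close>] le_trans by blast
    then show ?thesis
      using that P_iff[of l] by simp
  qed
  moreover have "?P 0"
    by (simp add: stack_omega_def)
  ultimately have "k \<le> (GREATEST l. l < L \<and> ?P l) \<longleftrightarrow> ?P k"
    using \<open>k < L\<close> by (rule le_Greatest_bounded_iff)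
  then show ?thesis
    unfolding layer_distance_def using P_iff \<open>k < L\<close> by simp
qed

locale block_circulant =
  fixes M N Z :: nat and H :: "nat \<Rightarrow> nat \<Rightarrow> bool"
  assumes Z_pos: "0 < Z"
    and circulant: "circulant_blocks M N Z H"
begin

lemma H_pi_shift:
  assumes "i < M * Z" "j < N * Z"
  shows "H (pi_shift Z s i) (pi_shift Z s j) = H i j"
proof (induction s)
  case (Suc s)
  have "H (pi_shift Z 1 (pi_shift Z s i)) (pi_shift Z 1 (pi_shift Z s j))
          = H (pi_shift Z s i) (pi_shift Z s j)"
    using circulant assms by (simp add: circulant_blocks_def pi_shift_less)
  then show ?case
    using Suc by (simp add: pi_shift_add)
qed simp

lemma pi_shift_mem_nbr:
  "j < N * Z \<Longrightarrow> i \<in> nbr M Z H j \<Longrightarrow> pi_shift Z s i \<in> nbr M Z H (pi_shift Z s j)"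
  unfolding nbr_def by (simp add: H_pi_shift pi_shift_less)

lemma nbr_low_residues_eq_UN_shifted:
  assumes "L dvd Z" "k \<le> L" "j < N * Z"
  shows "{i \<in> nbr M Z H (pi_shift Z (k - 1) j). i mod L < k}
           = (\<Union>t<k. pi_shift Z (k - 1 - t) ` {x \<in> nbr M Z H (pi_shift Z t j). x mod L = 0})"
proof (intro equalityI subsetI)
  fix y assume y: "y \<in> {i \<in> nbr M Z H (pi_shift Z (k - 1) j). i mod L < k}"
  define r where "r = y mod L"
  define x where "x = pi_shift Z (Z - r) y"
  have "r < k" "r \<le> Z"
    using y assms(1,2) Z_pos unfolding r_def by (auto dest: dvd_imp_le)
  have "x \<in> nbr M Z H (pi_shift Z (Z - r) (pi_shift Z (k - 1) j))"
    unfolding x_def using y assms(3) by (simp add: pi_shift_mem_nbr pi_shift_less)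
  also have "pi_shift Z (Z - r) (pi_shift Z (k - 1) j) = pi_shift Z Z (pi_shift Z (k - 1 - r) j)"
    using \<open>r < k\<close> \<open>r \<le> Z\<close> by (simp add: pi_shift_add)
  finally have "x \<in> nbr M Z H (pi_shift Z (k - 1 - r) j)"
    by (simp add: pi_shift_dvd)
  moreover have "x mod L = 0"
    unfolding x_def r_def using assms(1) Z_pos by (rule pi_shift_to_residue_0)
  moreover have "pi_shift Z (k - 1 - (k - 1 - r)) x = y"
    unfolding x_def using \<open>r < k\<close> \<open>r \<le> Z\<close> by (simp add: pi_shift_add pi_shift_dvd)
  ultimately have "y \<in> pi_shift Z (k - 1 - (k - 1 - r)) ` {x \<in> nbr M Z H (pi_shift Z (k - 1 - r) j). x mod L = 0}"
    by (intro image_eqI[where x = x]) simp_all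
  then show "y \<in> (\<Union>t<k. pi_shift Z (k - 1 - t) ` {x \<in> nbr M Z H (pi_shift Z t j). x mod L = 0})"
    using \<open>r < k\<close> by (intro UN_I[where a = "k - 1 - r"]) simp_all
next
  fix y assume "y \<in> (\<Union>t<k. pi_shift Z (k - 1 - t) ` {x \<in> nbr M Z H (pi_shift Z t j). x mod L = 0})"
  then obtain t where t: "t < k"
    and y_img: "y \<in> pi_shift Z (k - 1 - t) ` {x \<in> nbr M Z H (pi_shift Z t j). x mod L = 0}"
    by (rule UN_E) simp
  from y_img obtain x where y: "y = pi_shift Z (k - 1 - t) x"
    and "x \<in> {x \<in> nbr M Z H (pi_shift Z t j). x mod L = 0}"
    by (rule imageE)
  then have x: "x \<in> nbr M Z H (pi_shift Z t j)" "x mod L = 0"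
    by simp_all
  have "y \<in> nbr M Z H (pi_shift Z (k - 1 - t) (pi_shift Z t j))"
    unfolding y using x assms(3) by (simp add: pi_shift_mem_nbr pi_shift_less)
  moreover have "y mod L = k - 1 - t"
    unfolding y using x t assms(1,2) by (simp add: pi_shift_residue)
  ultimately show "y \<in> {i \<in> nbr M Z H (pi_shift Z (k - 1) j). i mod L < k}"
    using t by (simp add: pi_shift_add)
qed

lemma card_nbr_low_residues_eq_sum:
  assumes "L dvd Z" "k \<le> L" "j < N * Z"
  shows "card {i \<in> nbr M Z H (pi_shift Z (k - 1) j). i mod L < k}
           = (\<Sum>t<k. card {x \<in> nbr M Z H (pi_shift Z t j). x mod L = 0})"
proof -
  define A where "A t = {x \<in> nbr M Z H (pi_shift Z t j). x mod L = 0}" for t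
  have "L \<le> Z"
    using assms(1) Z_pos by (rule dvd_imp_le)
  have residue: "y mod L = k - 1 - t" if "y \<in> pi_shift Z (k - 1 - t) ` A t" "t < k" for y t
    using that assms(1,2) by (auto simp: A_def pi_shift_residue)
  have "card (\<Union>t<k. pi_shift Z (k - 1 - t) ` A t) = (\<Sum>t<k. card (pi_shift Z (k - 1 - t) ` A t))"
  proof (rule card_UN_disjoint)
    show "\<forall>t\<in>{..<k}. \<forall>t'\<in>{..<k}. t \<noteq> t' \<longrightarrow>
            pi_shift Z (k - 1 - t) ` A t \<inter> pi_shift Z (k - 1 - t') ` A t' = {}"
    proof (intro ballI impI equals0I)
      fix t t' y
      assume "t \<in> {..<k}" "t' \<in> {..<k}" "t \<noteq> t'"
        and "y \<in> pi_shift Z (k - 1 - t) ` A t \<inter> pi_shift Z (k - 1 - t') ` A t'"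
      then have "k - 1 - t = k - 1 - t'"
        using residue[of y t] residue[of y t'] by simp
      with \<open>t \<in> {..<k}\<close> \<open>t' \<in> {..<k}\<close> \<open>t \<noteq> t'\<close> show False
        by simp
    qed
  qed (simp_all add: A_def finite_nbr)
  also have "\<dots> = (\<Sum>t<k. card (A t))"
    using assms(2) \<open>L \<le> Z\<close> by (intro sum.cong refl card_image inj_on_subset[OF inj_pi_shift]) auto
  finally show ?thesis
    unfolding A_def using nbr_low_residues_eq_UN_shifted[OF assms] by simp
qed

lemma sum_card_zero_residue_nbrs_le_1:
  assumes "L dvd Z" "k \<le> L"
    and low: "\<forall>j<N * Z. card {i \<in> nbr M Z H j. i mod L < k} \<le> 1"
    and "j < N * Z"
  shows "(\<Sum>t<k. card {x \<in> nbr M Z H (pi_shift Z t j). x mod L = 0}) \<le> 1"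
proof -
  have "card {i \<in> nbr M Z H (pi_shift Z (k - 1) j). i mod L < k} \<le> 1"
    using low pi_shift_less[OF \<open>j < N * Z\<close>] by blast
  then show ?thesis
    by (simp only: card_nbr_low_residues_eq_sum[OF assms(1,2,4)])
qed

lemma nbr_conditions_if_card_nbr_low_residues_le_1:
  assumes "L dvd Z" "k \<le> L"
    and low: "\<forall>j<N * Z. card {i \<in> nbr M Z H j. i mod L < k} \<le> 1"
    and "j < N * Z"
  shows "(\<forall>t\<in>{1..<k}. nbr M Z H j \<inter> nbr M Z H (pi_shift Z t j) = {})
           \<and> card {x \<in> (\<Union>t<k. nbr M Z H (pi_shift Z t j)). x mod L = 0} \<le> 1"
proof
  note sum_le_1 = sum_card_zero_residue_nbrs_le_1[OF assms(1-3)]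
  have "card {x \<in> (\<Union>t<k. nbr M Z H (pi_shift Z t j)). x mod L = 0}
          = card (\<Union>t<k. {x \<in> nbr M Z H (pi_shift Z t j). x mod L = 0})"
    by (rule arg_cong[where f = card]) auto
  also have "\<dots> \<le> (\<Sum>t<k. card {x \<in> nbr M Z H (pi_shift Z t j). x mod L = 0})"
    by (rule card_UN_le) simp
  also have "\<dots> \<le> 1"
    using sum_le_1 \<open>j < N * Z\<close> .
  finally show "card {x \<in> (\<Union>t<k. nbr M Z H (pi_shift Z t j)). x mod L = 0} \<le> 1" .
  show "\<forall>t\<in>{1..<k}. nbr M Z H j \<inter> nbr M Z H (pi_shift Z t j) = {}"
  proof (intro ballI equals0I)
    fix t i assume t: "t \<in> {1..<k}" and "i \<in> nbr M Z H j \<inter> nbr M Z H (pi_shift Z t j)"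
    then have i: "i \<in> nbr M Z H j" "i \<in> nbr M Z H (pi_shift Z t j)"
      by simp_all
    define s where "s = Z - i mod L"
    define x where "x = pi_shift Z s i"
    define j' where "j' = pi_shift Z s j"
    have "x \<in> nbr M Z H (pi_shift Z s (pi_shift Z t j))"
      unfolding x_def using pi_shift_mem_nbr[OF pi_shift_less[OF \<open>j < N * Z\<close>] i(2)] .
    moreover have "pi_shift Z s (pi_shift Z t j) = pi_shift Z t j'"
      unfolding j'_def by (simp add: pi_shift_add add.commute)
    moreover have "x \<in> nbr M Z H j'"
      unfolding x_def j'_def using pi_shift_mem_nbr[OF \<open>j < N * Z\<close> i(1)] .
    ultimately have x: "x \<in> nbr M Z H (pi_shift Z 0 j')" "x \<in> nbr M Z H (pi_shift Z t j')"
      by simp_all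
    have "x mod L = 0"
      unfolding x_def s_def using assms(1) Z_pos by (rule pi_shift_to_residue_0)
    with x have nonempty: "1 \<le> card {x \<in> nbr M Z H (pi_shift Z t' j'). x mod L = 0}"
      if "t' \<in> {0, t}" for t'
      using that finite_nbr by (auto simp: Suc_le_eq card_gt_0_iff)
    have "2 \<le> (\<Sum>t'\<in>{0, t}. card {x \<in> nbr M Z H (pi_shift Z t' j'). x mod L = 0})"
      using nonempty[of 0] nonempty[of t] t by simp
    also have "\<dots> \<le> (\<Sum>t'<k. card {x \<in> nbr M Z H (pi_shift Z t' j'). x mod L = 0})"
      using t by (intro sum_mono2) auto
    also have "\<dots> \<le> 1"
      unfolding j'_def by (rule sum_le_1[OF pi_shift_less[OF \<open>j < N * Z\<close>]])
    finally show False
      by simp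
  qed
qed

lemma card_nbr_low_residues_le_1_if_nbr_conditions:
  assumes "L dvd Z" "k \<le> L"
    and cond: "\<forall>j<N * Z. (\<forall>t\<in>{1..<k}. nbr M Z H j \<inter> nbr M Z H (pi_shift Z t j) = {})
                 \<and> card {x \<in> (\<Union>t<k. nbr M Z H (pi_shift Z t j)). x mod L = 0} \<le> 1"
    and "j' < N * Z"
  shows "card {i \<in> nbr M Z H j'. i mod L < k} \<le> 1"
proof -
  define j where "j = pi_shift Z (Z - (k - 1)) j'"
  have "k - 1 \<le> Z"
    using dvd_imp_le[OF assms(1) Z_pos] assms(2) by linarith
  then have j: "j < N * Z" "pi_shift Z (k - 1) j = j'"
    unfolding j_def using \<open>j' < N * Z\<close> by (simp_all add: pi_shift_less pi_shift_add pi_shift_dvd)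
  have disjoint: "nbr M Z H (pi_shift Z a j) \<inter> nbr M Z H (pi_shift Z b j) = {}"
    if "a < b" "b < k" for a b
  proof -
    have "\<forall>t\<in>{1..<k}. nbr M Z H (pi_shift Z a j) \<inter> nbr M Z H (pi_shift Z t (pi_shift Z a j)) = {}"
      using cond pi_shift_less[OF j(1)] by blast
    moreover have "b - a \<in> {1..<k}"
      using that by auto
    ultimately have "nbr M Z H (pi_shift Z a j) \<inter> nbr M Z H (pi_shift Z (b - a) (pi_shift Z a j)) = {}"
      by blast
    then show ?thesis
      using that by (simp add: pi_shift_add)
  qed
  have "card {i \<in> nbr M Z H j'. i mod L < k}
          = (\<Sum>t<k. card {x \<in> nbr M Z H (pi_shift Z t j). x mod L = 0})"
    using card_nbr_low_residues_eq_sum[OF assms(1,2) j(1)] j(2) by simp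
  also have "\<dots> = card (\<Union>t<k. {x \<in> nbr M Z H (pi_shift Z t j). x mod L = 0})"
  proof (rule card_UN_disjoint[symmetric])
    show "\<forall>a\<in>{..<k}. \<forall>b\<in>{..<k}. a \<noteq> b \<longrightarrow>
            {x \<in> nbr M Z H (pi_shift Z a j). x mod L = 0} \<inter> {x \<in> nbr M Z H (pi_shift Z b j). x mod L = 0} = {}"
      using disjoint by (auto simp: neq_iff)
  qed (auto simp: finite_nbr)
  also have "(\<Union>t<k. {x \<in> nbr M Z H (pi_shift Z t j). x mod L = 0})
               = {x \<in> (\<Union>t<k. nbr M Z H (pi_shift Z t j)). x mod L = 0}"
    by auto
  finally show ?thesis
    using cond j(1) by simp
qed

end

theorem lemma4:
  fixes M N Z L k :: nat and H :: "nat \<Rightarrow> nat \<Rightarrow> bool"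
  assumes "0 < M" and "0 < N" and "0 < Z"
    and "circulant_blocks M N Z H"
    and "no_zero_row M N Z H"
    and "no_identical_rows M N Z H"
    and "1 < L" and "L dvd Z"
    and "1 \<le> k" and "k \<le> L - 1"
  shows "(feasible M Z L 1 {x. x < M*Z \<and> x mod L = 0} \<and>
          k \<le> layer_distance N Z L H 1 {x. x < M*Z \<and> x mod L = 0})
     \<longleftrightarrow> (\<forall>j<N*Z.
            (\<forall>t\<in>{1..<k}. nbr M Z H j \<inter> nbr M Z H (pi_shift Z t j) = {}) \<and>
            card {x \<in> (\<Union>t<k. nbr M Z H (pi_shift Z t j)). x mod L = 0} \<le> 1)"
proof -
  interpret block_circulant M N Z H
    using assms(3,4) by unfold_locales
  have "k < L" "k \<le> L"
    using assms(7,10) by simp_all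
  then have "k \<le> layer_distance N Z L H 1 {x. x < M*Z \<and> x mod L = 0}
               \<longleftrightarrow> (\<forall>j<N * Z. card {i \<in> nbr M Z H j. i mod L < k} \<le> 1)"
    using assms(2,3,8) by (intro layer_distance_ge_iff)
  also have "\<dots> \<longleftrightarrow> (\<forall>j<N*Z.
            (\<forall>t\<in>{1..<k}. nbr M Z H j \<inter> nbr M Z H (pi_shift Z t j) = {}) \<and>
            card {x \<in> (\<Union>t<k. nbr M Z H (pi_shift Z t j)). x mod L = 0} \<le> 1)"
    using nbr_conditions_if_card_nbr_low_residues_le_1[OF assms(8) \<open>k \<le> L\<close>]
      card_nbr_low_residues_le_1_if_nbr_conditions[OF assms(8) \<open>k \<le> L\<close>]
    by blast
  finally show ?thesis
    using feasible_residue_class[OF assms(8,3)] by simp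
qed

end
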